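(* Consider the following distributed algorithm. $G=(V,E)$ is a connected undirected graph on $V=\{1,\dots,m\}$ without self-loops, with adjacency matrix $H$, Laplacian $\mathcal{L}$ and maximum degree $\Delta_{\max}$; $0<c<1/\Delta_{\max}$. Priority vectors evolve by $w^i(k+1)=w^i(k)+c\sum_j h^i_j(w^j(k)-w^i(k))$, each $w^i(0)$ having entries in $(0,1)$ summing to $1$. Weights: $a^i_j(k)=w^i_j(k)$ if $(i,j)\in E$; $a^i_i(k)=w^i_i(k)+\sum_{j\ne i,(i,j)\notin E}w^i_j(k)$; $a^i_j(k)=0$ if $j\ne i$, $(i,j)\notin E$. The functions $f_i:\mathbb{R}^n\to\mathbb{R}$ are continuously differentiable and convex, $X\subset\mathbb{R}^n$ is nonempty, compact and convex, $P_X$ is the Euclidean projection onto $X$, and $\alpha_k>0$. Given $x^i(0)\in\mathbb{R}^n$, set $v^i(k)=\sum_j a^i_j(k)x^j(k)$, $d_i(k)=\nabla f_i(x^i(k))$, $x^i(k+1)=P_X[v^i(k)-\alpha_k d_i(k)]$, and $y(k)=\frac1m\sum_{j=1}^m x^j(k)$. Then: (a) if $\lim_{k\to\infty}\alpha_k=0$, then $\lim_{k\to\infty}\|x^i(k)-y(k)\|=0$ for all $i$; (b) if $\sum_{k=1}^\infty\alpha_k^2<\infty$, then $\sum_{k=1}^\infty\alpha_k\|x^i(k)-y(k)\|<\infty$ for all $i$.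
   Context: Each agent $i$ knows only $f_i$; $x^i(k)$ is agent $i$'s decision vector. The gradients are assumed bounded along the iterates: there is a constant $L$ with $\|d_i(k)\|\le L$ for all $i,k$ (the paper derives this from continuity of the gradients and compactness of $X$). *)

theory Defs
  imports "HOL-Analysis.Analysis"
begin

text \<open>Agents are indexed by 0..m-1 (the paper uses 1..m). The graph is given by an
  edge relation E on {..<m}.\<close>

definition graph_edges :: "nat \<Rightarrow> (nat \<Rightarrow> nat \<Rightarrow> bool) \<Rightarrow> (nat \<times> nat) set" where
  "graph_edges m E = {(i, j). i < m \<and> j < m \<and> E i j}"

definition undirected_graph :: "nat \<Rightarrow> (nat \<Rightarrow> nat \<Rightarrow> bool) \<Rightarrow> bool" where
  "undirected_graph m E \<longleftrightarrow> (\<forall>i<m. \<forall>j<m. E i j \<longleftrightarrow> E j i) \<and> (\<forall>i<m. \<not> E i i)"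

definition connected_graph :: "nat \<Rightarrow> (nat \<Rightarrow> nat \<Rightarrow> bool) \<Rightarrow> bool" where
  "connected_graph m E \<longleftrightarrow> (\<forall>i<m. \<forall>j<m. (i, j) \<in> (graph_edges m E)\<^sup>*)"

definition adj :: "(nat \<Rightarrow> nat \<Rightarrow> bool) \<Rightarrow> nat \<Rightarrow> nat \<Rightarrow> real" where
  "adj E i j = (if E i j then 1 else 0)"

definition degree :: "nat \<Rightarrow> (nat \<Rightarrow> nat \<Rightarrow> bool) \<Rightarrow> nat \<Rightarrow> nat" where
  "degree m E i = card {j. j < m \<and> E i j}"

definition max_degree :: "nat \<Rightarrow> (nat \<Rightarrow> nat \<Rightarrow> bool) \<Rightarrow> nat" where
  "max_degree m E = Max (degree m E ` {..<m})"

text \<open>Weights a^i_j(k) built from the priority vector w^i(k) = (\<lambda>j. w k i j).\<close>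
definition weight :: "nat \<Rightarrow> (nat \<Rightarrow> nat \<Rightarrow> bool) \<Rightarrow> (nat \<Rightarrow> nat \<Rightarrow> nat \<Rightarrow> real)
    \<Rightarrow> nat \<Rightarrow> nat \<Rightarrow> nat \<Rightarrow> real" where
  "weight m E w k i j =
     (if j = i then w k i i + (\<Sum>l\<in>{l. l < m \<and> l \<noteq> i \<and> \<not> E i l}. w k i l)
      else if E i j then w k i j else 0)"

end

theory Submission
  imports Defs
begin

text \<open>The priority vectors stay row-stochastic with all entries at least their initial minimum
  \<open>\<eta> > 0\<close>, so the weights \<open>a(k)\<close> are row-stochastic with diagonal and edge entries at least \<open>\<eta>\<close>.
  The algorithm is therefore a perturbed consensus iteration
  \<open>x\<^sup>i(k+1) = (\<Sum>\<^sub>j a\<^sup>i\<^sub>j(k) x\<^sup>j(k)) + e\<^sup>i(k)\<close>, and since the projection is nonexpansive and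
  \<open>v\<^sup>i(k) \<in> X\<close>, the perturbation is \<open>\<parallel>e\<^sup>i(k)\<parallel> \<le> \<alpha>\<^sub>k L\<close> with \<open>L\<close> a bound of the gradients on \<open>X\<close>.
  In a connected graph every agent influences every other one within a fixed number \<open>B\<close> of
  rounds, with weight at least \<open>\<eta>\<^sup>B\<close>. Following a lower and an upper bound of the components of
  the iterates along the direction of \<open>x\<^sup>i - x\<^sup>j\<close>, this makes the disagreement
  \<open>D(k) = max\<^sub>i\<^sub>j \<parallel>x\<^sup>i(k) - x\<^sup>j(k)\<parallel>\<close> contract:
  \<open>D(k+B) \<le> (1 - \<eta>\<^sup>B) D(k) + 2 (\<epsilon>(k) + \<dots> + \<epsilon>(k+B-1))\<close> with \<open>\<epsilon>(t) = \<Sum>\<^sub>i \<parallel>e\<^sup>i(t)\<parallel>\<close>.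
  This recursion gives \<open>D(k) \<longlonglongrightarrow> 0\<close> when \<open>\<alpha>\<^sub>k \<longlonglongrightarrow> 0\<close> (\<open>D\<close> is bounded because \<open>x(k) \<in> X\<close> for
  \<open>k \<ge> 1\<close>) and \<open>\<Sum> D(k)\<^sup>2 < \<infinity>\<close> when \<open>\<Sum> \<alpha>\<^sub>k\<^sup>2 < \<infinity>\<close>; finally \<open>\<parallel>x\<^sup>i(k) - y(k)\<parallel> \<le> D(k)\<close> and
  \<open>\<alpha>\<^sub>k D(k) \<le> (\<alpha>\<^sub>k\<^sup>2 + D(k)\<^sup>2) / 2\<close>.\<close>

lemma LIMSEQ_zero_of_delayed_contraction:
  fixes D u :: "nat \<Rightarrow> real"
  assumes nonneg: "\<And>k. 0 \<le> D k" and bounded: "\<And>k. D k \<le> M"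
    and rec: "\<And>k. D (k + B) \<le> \<rho> * D k + u k"
    and "0 \<le> \<rho>" "\<rho> < 1" and u: "u \<longlonglongrightarrow> 0"
  shows "D \<longlonglongrightarrow> 0"
proof (rule LIMSEQ_I)
  fix e :: real assume "0 < e"
  define \<delta> where "\<delta> = e * (1 - \<rho>) / 2"
  have "0 < \<delta>" using \<open>0 < e\<close> \<open>\<rho> < 1\<close> by (simp add: \<delta>_def)
  then obtain K where K: "\<And>k. k \<ge> K \<Longrightarrow> u k < \<delta>"
    using LIMSEQ_D[OF u] by (metis abs_less_iff diff_zero real_norm_def)
  have iterate: "D (k + n * B) \<le> \<rho> ^ n * M + \<delta> / (1 - \<rho>)" if "k \<ge> K" for n k
  proof (induction n)
    case 0
    have "0 \<le> \<delta> / (1 - \<rho>)" using \<open>0 < \<delta>\<close> \<open>\<rho> < 1\<close> by simp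
    then show ?case using bounded[of k] by simp
  next
    case (Suc n)
    have "D (k + Suc n * B) \<le> \<rho> * D (k + n * B) + u (k + n * B)"
      using rec[of "k + n * B"] by (simp add: algebra_simps)
    also have "\<dots> \<le> \<rho> * (\<rho> ^ n * M + \<delta> / (1 - \<rho>)) + \<delta>"
      using K[of "k + n * B"] that Suc.IH \<open>0 \<le> \<rho>\<close> by (auto intro!: add_mono mult_left_mono)
    also have "\<dots> = \<rho> ^ Suc n * M + \<delta> / (1 - \<rho>)"
      using \<open>\<rho> < 1\<close> by (simp add: field_simps)
    finally show ?case .
  qed
  have "(\<lambda>n. \<rho> ^ n * M) \<longlonglongrightarrow> 0"
    using \<open>0 \<le> \<rho>\<close> \<open>\<rho> < 1\<close> by (intro tendsto_mult_left_zero LIMSEQ_power_zero) simp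
  then obtain N where "norm (\<rho> ^ N * M - 0) < e / 2"
    using LIMSEQ_D[of _ 0 "e / 2"] \<open>0 < e\<close> by (meson half_gt_zero order_refl)
  then have N: "\<rho> ^ N * M < e / 2" by simp
  have "D k < e" if "k \<ge> K + N * B" for k
  proof -
    have "D k \<le> \<rho> ^ N * M + \<delta> / (1 - \<rho>)"
      using iterate[of "k - N * B" N] that by simp
    also have "\<delta> / (1 - \<rho>) = e / 2" using \<open>\<rho> < 1\<close> by (simp add: \<delta>_def field_simps)
    finally show ?thesis using N by simp
  qed
  then show "\<exists>k0. \<forall>k\<ge>k0. norm (D k - 0) < e" using nonneg by auto
qed

lemma summable_of_delayed_contraction:
  fixes S v :: "nat \<Rightarrow> real"
  assumes nonneg: "\<And>k. 0 \<le> S k" "\<And>k. 0 \<le> v k"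
    and rec: "\<And>k. S (k + B) \<le> \<rho> * S k + v k"
    and "0 \<le> \<rho>" "\<rho> < 1" and "summable v"
  shows "summable S"
proof (rule summableI_nonneg_bounded[OF nonneg(1)])
  fix n
  define C where "C = (\<Sum>k<B. S k) + suminf v"
  have "(\<Sum>k<n + B. S k) = (\<Sum>k<B. S k) + (\<Sum>k<n. S (k + B))"
    by (induction n) (simp_all add: ac_simps)
  also have "(\<Sum>k<n. S (k + B)) \<le> \<rho> * (\<Sum>k<n. S k) + (\<Sum>k<n. v k)"
    using sum_mono[of "{..<n}", OF rec] by (simp add: sum.distrib sum_distrib_left)
  also have "\<dots> \<le> \<rho> * (\<Sum>k<n + B. S k) + suminf v"
    using nonneg \<open>0 \<le> \<rho>\<close> \<open>summable v\<close>
    by (intro add_mono mult_left_mono sum_mono2 sum_le_suminf) auto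
  finally have "(1 - \<rho>) * (\<Sum>k<n + B. S k) \<le> C" by (simp add: C_def algebra_simps)
  then have "(\<Sum>k<n + B. S k) \<le> C / (1 - \<rho>)"
    using \<open>\<rho> < 1\<close> by (simp add: field_simps)
  moreover have "(\<Sum>k<n. S k) \<le> (\<Sum>k<n + B. S k)"
    using nonneg by (intro sum_mono2) auto
  ultimately show "(\<Sum>k<n. S k) \<le> C / (1 - \<rho>)" by linarith
qed

lemma power2_convex_add_le:
  fixes \<rho> a b :: real
  assumes "0 \<le> \<rho>" "\<rho> < 1"
  shows "(\<rho> * a + b)\<^sup>2 \<le> \<rho> * a\<^sup>2 + b\<^sup>2 / (1 - \<rho>)"
proof -
  have "(1 - \<rho>) * (\<rho> * a\<^sup>2 + b\<^sup>2 / (1 - \<rho>) - (\<rho> * a + b)\<^sup>2) = \<rho> * ((1 - \<rho>) * a - b)\<^sup>2"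
    using assms by (simp add: power2_eq_square field_simps)
  also have "\<dots> \<ge> 0" using assms by simp
  finally show ?thesis using assms by (simp add: zero_le_mult_iff)
qed

lemma summable_mult_of_summable_power2:
  fixes f g :: "nat \<Rightarrow> real"
  assumes "summable (\<lambda>k. (f k)\<^sup>2)" "summable (\<lambda>k. (g k)\<^sup>2)"
  shows "summable (\<lambda>k. f k * g k)"
proof (rule summable_comparison_test[OF _ summable_divide[OF summable_add[OF assms], of 2]])
  have "norm (f k * g k) \<le> ((f k)\<^sup>2 + (g k)\<^sup>2) / 2" for k
    using sum_squares_bound[of "\<bar>f k\<bar>" "\<bar>g k\<bar>"] by (simp add: abs_mult power2_eq_square)
  then show "\<exists>N. \<forall>k\<ge>N. norm (f k * g k) \<le> ((f k)\<^sup>2 + (g k)\<^sup>2) / 2" by blast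
qed

lemma matrix_pos_lower_bound:
  fixes w :: "nat \<Rightarrow> nat \<Rightarrow> real"
  assumes "\<And>i j. i < m \<Longrightarrow> j < m \<Longrightarrow> 0 < w i j"
  obtains \<eta> where "0 < \<eta>" "\<And>i j. i < m \<Longrightarrow> j < m \<Longrightarrow> \<eta> \<le> w i j"
proof
  let ?\<eta> = "Min (insert 1 (case_prod w ` ({..<m} \<times> {..<m})))"
  show "0 < ?\<eta>" using assms by auto
  show "?\<eta> \<le> w i j" if "i < m" "j < m" for i j
    using that by (intro Min_le) auto
qed

lemma continuous_family_bounded_on_compact:
  fixes g :: "nat \<Rightarrow> 'a::topological_space \<Rightarrow> 'b::real_normed_vector"
  assumes "compact X" "\<And>i. i < m \<Longrightarrow> continuous_on X (g i)"
  obtains L where "\<And>i z. i < m \<Longrightarrow> z \<in> X \<Longrightarrow> norm (g i z) \<le> L"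
proof -
  have "bounded (\<Union>i<m. g i ` X)"
    using assms by (intro bounded_UN ballI compact_imp_bounded compact_continuous_image) auto
  then show ?thesis using that unfolding bounded_iff by blast
qed

lemma relpow_pad_loop:
  assumes "(p, q) \<in> R ^^ n" "(q, q) \<in> R" "n \<le> N"
  shows "(p, q) \<in> R ^^ N"
proof -
  have "(p, q) \<in> R ^^ (n + d)" for d
    by (induction d) (use assms in \<open>auto intro: relpow_Suc_I\<close>)
  then show ?thesis using \<open>n \<le> N\<close> le_Suc_ex by blast
qed

lemma closest_point_step_le:
  fixes X :: "'a::euclidean_space set"
  assumes "convex X" "closed X" "v \<in> X"
  shows "norm (closest_point X (v - d) - v) \<le> norm d"
  using closest_point_lipschitz[OF assms(1,2), of "v - d" v] closest_point_self[OF assms(3)] assms(3)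
  by (auto simp: dist_norm)

lemma inner_sgn_self: "inner (sgn v) v = norm v"
  by (cases "v = 0") (simp_all add: sgn_div_norm power2_norm_eq_inner[symmetric] power2_eq_square)

definition disagreement :: "nat \<Rightarrow> (nat \<Rightarrow> 'a::real_normed_vector) \<Rightarrow> real" where
  "disagreement m z = Max ((\<lambda>(i, j). norm (z i - z j)) ` ({..<m} \<times> {..<m}))"

lemma disagreement_ge: "i < m \<Longrightarrow> j < m \<Longrightarrow> norm (z i - z j) \<le> disagreement m z"
  unfolding disagreement_def by (intro Max_ge) auto

lemma disagreement_nonneg: "0 < m \<Longrightarrow> 0 \<le> disagreement m z"
  using disagreement_ge[where i=0 and j=0 and m=m and z=z] by simp

lemma disagreement_le:
  "0 < m \<Longrightarrow> (\<And>i j. i < m \<Longrightarrow> j < m \<Longrightarrow> norm (z i - z j) \<le> r) \<Longrightarrow> disagreement m z \<le> r"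
  unfolding disagreement_def by (subst Max_le_iff) auto

lemma norm_diff_average_le_disagreement:
  assumes "i < m"
  shows "norm (z i - (1 / real m) *\<^sub>R (\<Sum>j<m. z j)) \<le> disagreement m z"
proof -
  have "z i - (1 / real m) *\<^sub>R (\<Sum>j<m. z j) = (1 / real m) *\<^sub>R (\<Sum>j<m. z i - z j)"
    using assms by (simp add: sum_subtractf scaleR_diff_right sum_constant_scaleR)
  also have "norm \<dots> \<le> (1 / real m) * (\<Sum>j<m. norm (z i - z j))"
    by (simp add: norm_sum divide_right_mono)
  also have "\<dots> \<le> (1 / real m) * (\<Sum>j<m. disagreement m z)"
    using assms by (intro mult_left_mono sum_mono disagreement_ge) auto
  also have "\<dots> = disagreement m z" using assms by simp
  finally show ?thesis .
qed

lemma disagreement_le_diameter: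
  assumes "0 < m" "bounded X" "\<And>i. i < m \<Longrightarrow> z i \<in> X"
  shows "disagreement m z \<le> diameter X"
  using assms diameter_bounded_bound[of X] by (intro disagreement_le) (auto simp: dist_norm)

text \<open>\<open>(p, q) \<in> influence m E\<close> means that agent \<open>q\<close> gives weight at least \<open>\<eta>\<close> to agent \<open>p\<close>
  (note the reversed edge), so \<open>influence m E ^^ s\<close> tracks how far a value spreads in \<open>s\<close> rounds.\<close>

definition influence :: "nat \<Rightarrow> (nat \<Rightarrow> nat \<Rightarrow> bool) \<Rightarrow> (nat \<times> nat) set" where
  "influence m E = {(p, q). p < m \<and> q < m \<and> (p = q \<or> E q p)}"

lemma connected_graph_uniform_influence:
  assumes "connected_graph m E" "undirected_graph m E" "0 < m"
  shows "\<exists>B. \<forall>j<m. (0, j) \<in> influence m E ^^ B"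
proof -
  have "graph_edges m E \<subseteq> influence m E"
    using \<open>undirected_graph m E\<close>
    by (auto simp: graph_edges_def influence_def undirected_graph_def)
  moreover have "(0, j) \<in> (graph_edges m E)\<^sup>*" if "j < m" for j
    using assms(1,3) that unfolding connected_graph_def by simp
  ultimately have "\<exists>n. (0, j) \<in> influence m E ^^ n" if "j < m" for j
    using that rtrancl_mono rtrancl_power by blast
  then obtain n where n: "\<And>j. j < m \<Longrightarrow> (0, j) \<in> influence m E ^^ n j" by metis
  have "(0, j) \<in> influence m E ^^ (\<Sum>l<m. n l)" if "j < m" for j
  proof (rule relpow_pad_loop[OF n[OF that]])
    show "(j, j) \<in> influence m E" using that by (simp add: influence_def)
    show "n j \<le> (\<Sum>l<m. n l)" using that by (intro member_le_sum) auto
  qed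
  then show ?thesis by blast
qed

locale graph_stochastic_weights =
  fixes m :: nat and E :: "nat \<Rightarrow> nat \<Rightarrow> bool" and \<eta> :: real
    and a :: "nat \<Rightarrow> nat \<Rightarrow> nat \<Rightarrow> real"
  assumes row_sum: "i < m \<Longrightarrow> (\<Sum>j<m. a t i j) = 1"
    and nonneg: "i < m \<Longrightarrow> j < m \<Longrightarrow> 0 \<le> a t i j"
    and diag_ge: "i < m \<Longrightarrow> \<eta> \<le> a t i i"
    and edge_ge: "i < m \<Longrightarrow> j < m \<Longrightarrow> E i j \<Longrightarrow> \<eta> \<le> a t i j"
    and eta_pos: "0 < \<eta>"
    and agents: "0 < m"
begin

lemma eta_le_one: "\<eta> \<le> 1"
proof -
  have "a t 0 0 \<le> (\<Sum>j<m. a t 0 j)"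
    using nonneg agents by (intro member_le_sum) auto
  then show ?thesis using diag_ge[of 0 t] row_sum[of 0 t] agents by linarith
qed

lemma influence_ge: "(l, j) \<in> influence m E \<Longrightarrow> \<eta> \<le> a t j l"
  unfolding influence_def using diag_ge edge_ge by auto

lemma lower_bound_propagation:
  fixes z :: "nat \<Rightarrow> nat \<Rightarrow> real"
  assumes step: "\<And>t i. i < m \<Longrightarrow> (\<Sum>j<m. a t i j * z t j) - \<epsilon> t \<le> z (Suc t) i"
    and lo: "\<And>j. j < m \<Longrightarrow> lo \<le> z k j" and "p < m" and "j < m"
  shows "lo - (\<Sum>t<s. \<epsilon> (k + t))
           + (if (p, j) \<in> influence m E ^^ s then \<eta> ^ s * (z k p - lo) else 0) \<le> z (k + s) j"
  using \<open>j < m\<close>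
proof (induction s arbitrary: j)
  case 0
  then show ?case using lo by (auto simp: \<open>p < m\<close>)
next
  case (Suc s)
  define \<delta> where "\<delta> = z k p - lo"
  define base where "base = lo - (\<Sum>t<s. \<epsilon> (k + t))"
  define margin where "margin l = (if (p, l) \<in> influence m E ^^ s then \<eta> ^ s * \<delta> else 0)" for l
  have margin_nonneg: "0 \<le> margin l" for l
    using lo[OF \<open>p < m\<close>] eta_pos by (simp add: margin_def \<delta>_def)
  have average: "(\<Sum>l<m. a (k + s) j l * (base + margin l)) = base + (\<Sum>l<m. a (k + s) j l * margin l)"
    using row_sum[OF Suc.prems] by (simp add: distrib_left sum.distrib sum_distrib_right[symmetric])
  have gain: "(if (p, j) \<in> influence m E ^^ Suc s then \<eta> ^ Suc s * \<delta> else 0)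
      \<le> (\<Sum>l<m. a (k + s) j l * margin l)"
  proof (cases "(p, j) \<in> influence m E ^^ Suc s")
    case True
    then obtain l where l: "(p, l) \<in> influence m E ^^ s" "(l, j) \<in> influence m E"
      by (rule relpow_Suc_E)
    then have "l < m" by (auto simp: influence_def)
    have "\<eta> ^ Suc s * \<delta> \<le> a (k + s) j l * margin l"
      using l influence_ge[OF l(2)] margin_nonneg[of l]
      by (simp add: margin_def mult.assoc mult_right_mono)
    also have "\<dots> \<le> (\<Sum>l<m. a (k + s) j l * margin l)"
      using \<open>l < m\<close> Suc.prems nonneg margin_nonneg
      by (intro member_le_sum mult_nonneg_nonneg) auto
    finally show ?thesis using True by simp
  next
    case False
    then show ?thesis
      using Suc.prems nonneg margin_nonneg by (auto intro!: sum_nonneg)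
  qed
  have "base + margin l \<le> z (k + s) l" if "l < m" for l
    using Suc.IH[OF that] by (cases "(p, l) \<in> influence m E ^^ s") (simp_all add: base_def margin_def \<delta>_def)
  then have "(\<Sum>l<m. a (k + s) j l * (base + margin l)) \<le> (\<Sum>l<m. a (k + s) j l * z (k + s) l)"
    using Suc.prems nonneg by (intro sum_mono mult_left_mono) auto
  then show ?case
    using average gain step[OF Suc.prems, of "k + s"]
    unfolding base_def \<delta>_def sum.lessThan_Suc add_Suc_right by linarith
qed

lemma spread_contraction:
  fixes z :: "nat \<Rightarrow> nat \<Rightarrow> real"
  assumes pert: "\<And>t i. i < m \<Longrightarrow> \<bar>z (Suc t) i - (\<Sum>j<m. a t i j * z t j)\<bar> \<le> \<epsilon> t"
    and reach: "\<And>j. j < m \<Longrightarrow> (0, j) \<in> influence m E ^^ B"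
    and range: "\<And>l. l < m \<Longrightarrow> lo \<le> z k l \<and> z k l \<le> hi"
    and "i < m" "j < m"
  shows "z (k + B) i - z (k + B) j \<le> (1 - \<eta> ^ B) * (hi - lo) + 2 * (\<Sum>t<B. \<epsilon> (k + t))"
proof -
  have below: "(\<Sum>j<m. a t i j * z t j) - \<epsilon> t \<le> z (Suc t) i" if "i < m" for t i
    using pert[OF that, of t] unfolding abs_le_iff by linarith
  have above: "(\<Sum>j<m. a t i j * - z t j) - \<epsilon> t \<le> - z (Suc t) i" if "i < m" for t i
    using pert[OF that, of t] unfolding abs_le_iff sum_negf mult_minus_right by linarith
  have "lo - (\<Sum>t<B. \<epsilon> (k + t)) + \<eta> ^ B * (z k 0 - lo) \<le> z (k + B) j"
    using lower_bound_propagation[OF below _ agents \<open>j < m\<close>, of lo k B] range reach[OF \<open>j < m\<close>]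
    by simp
  moreover have "- hi - (\<Sum>t<B. \<epsilon> (k + t)) + \<eta> ^ B * (- z k 0 + hi) \<le> - z (k + B) i"
    using lower_bound_propagation[OF above _ agents \<open>i < m\<close>, of "- hi" k B] range reach[OF \<open>i < m\<close>]
    by simp
  ultimately show ?thesis by (simp add: algebra_simps)
qed

lemma disagreement_contraction:
  fixes x :: "nat \<Rightarrow> nat \<Rightarrow> 'a::real_inner"
  assumes pert: "\<And>t i. i < m \<Longrightarrow> norm (x (Suc t) i - (\<Sum>j<m. a t i j *\<^sub>R x t j)) \<le> \<epsilon> t"
    and reach: "\<And>j. j < m \<Longrightarrow> (0, j) \<in> influence m E ^^ B"
  shows "disagreement m (x (k + B))
    \<le> (1 - \<eta> ^ B) * disagreement m (x k) + 2 * (\<Sum>t<B. \<epsilon> (k + t))"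
proof (rule disagreement_le[OF agents])
  fix i j assume "i < m" "j < m"
  define u where "u = sgn (x (k + B) i - x (k + B) j)"
  have "norm u \<le> 1" by (simp add: u_def norm_sgn)
  then have u_le: "\<bar>inner u v\<bar> \<le> norm v" for v
    using Cauchy_Schwarz_ineq2 mult_left_le_one_le norm_ge_zero order_trans by metis
  define z where "z t l = inner u (x t l)" for t l
  define lo where "lo = Min (z k ` {..<m})"
  have "lo \<in> z k ` {..<m}"
    unfolding lo_def using agents by (intro Min_in) auto
  then obtain l0 where "l0 < m" "lo = z k l0" by auto
  have range: "lo \<le> z k l \<and> z k l \<le> lo + disagreement m (x k)" if "l < m" for l
  proof
    show "lo \<le> z k l" using that by (simp add: lo_def)
    have "z k l - z k l0 \<le> norm (x k l - x k l0)"
      using u_le[of "x k l - x k l0"] by (simp add: z_def inner_diff_right)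
    then show "z k l \<le> lo + disagreement m (x k)"
      using disagreement_ge[OF that \<open>l0 < m\<close>, of "x k"] \<open>lo = z k l0\<close> by simp
  qed
  have pert_z: "\<bar>z (Suc t) l - (\<Sum>j<m. a t l j * z t j)\<bar> \<le> \<epsilon> t" if "l < m" for t l
    using u_le[of "x (Suc t) l - (\<Sum>j<m. a t l j *\<^sub>R x t j)"] pert[OF that, of t]
    by (simp add: z_def inner_diff_right inner_sum_right)
  have "z (k + B) i - z (k + B) j
      \<le> (1 - \<eta> ^ B) * (lo + disagreement m (x k) - lo) + 2 * (\<Sum>t<B. \<epsilon> (k + t))"
    by (rule spread_contraction[OF pert_z reach range \<open>i < m\<close> \<open>j < m\<close>])
  moreover have "z (k + B) i - z (k + B) j = norm (x (k + B) i - x (k + B) j)"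
    by (simp add: z_def u_def inner_sgn_self flip: inner_diff_right)
  ultimately show "norm (x (k + B) i - x (k + B) j)
      \<le> (1 - \<eta> ^ B) * disagreement m (x k) + 2 * (\<Sum>t<B. \<epsilon> (k + t))"
    by simp
qed

lemma contraction_factor_bounds: "0 \<le> 1 - \<eta> ^ B" "1 - \<eta> ^ B < 1"
  using eta_pos eta_le_one by (simp_all add: power_le_one)

lemma disagreement_tendsto_zero:
  fixes x :: "nat \<Rightarrow> nat \<Rightarrow> 'a::real_inner"
  assumes pert: "\<And>t i. i < m \<Longrightarrow> norm (x (Suc t) i - (\<Sum>j<m. a t i j *\<^sub>R x t j)) \<le> \<epsilon> t"
    and reach: "\<And>j. j < m \<Longrightarrow> (0, j) \<in> influence m E ^^ B"
    and "\<epsilon> \<longlonglongrightarrow> 0" and bounded: "\<And>k. disagreement m (x k) \<le> M"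
  shows "(\<lambda>k. disagreement m (x k)) \<longlonglongrightarrow> 0"
proof (rule LIMSEQ_zero_of_delayed_contraction)
  show "disagreement m (x (k + B)) \<le> (1 - \<eta> ^ B) * disagreement m (x k) + 2 * (\<Sum>t<B. \<epsilon> (k + t))"
    for k by (rule disagreement_contraction[OF pert reach])
  have "(\<lambda>k. \<Sum>t<B. \<epsilon> (k + t)) \<longlonglongrightarrow> (\<Sum>t<B. 0)"
    using \<open>\<epsilon> \<longlonglongrightarrow> 0\<close> by (intro tendsto_sum) (simp add: LIMSEQ_ignore_initial_segment)
  then show "(\<lambda>k. 2 * (\<Sum>t<B. \<epsilon> (k + t))) \<longlonglongrightarrow> 0"
    using tendsto_mult_right_zero by auto
qed (use bounded disagreement_nonneg[OF agents] contraction_factor_bounds in auto)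

lemma disagreement_power2_summable:
  fixes x :: "nat \<Rightarrow> nat \<Rightarrow> 'a::real_inner"
  assumes pert: "\<And>t i. i < m \<Longrightarrow> norm (x (Suc t) i - (\<Sum>j<m. a t i j *\<^sub>R x t j)) \<le> \<epsilon> t"
    and reach: "\<And>j. j < m \<Longrightarrow> (0, j) \<in> influence m E ^^ B"
    and "summable (\<lambda>t. (\<epsilon> t)\<^sup>2)"
  shows "summable (\<lambda>k. (disagreement m (x k))\<^sup>2)"
proof -
  define \<rho> where "\<rho> = 1 - \<eta> ^ B"
  define u where "u k = 2 * (\<Sum>t<B. \<epsilon> (k + t))" for k
  have "0 \<le> \<epsilon> t" for t using pert[OF agents, of t] norm_ge_zero order_trans by blast
  then have "0 \<le> u k" for k by (simp add: u_def sum_nonneg)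
  have "(disagreement m (x (k + B)))\<^sup>2 \<le> (\<rho> * disagreement m (x k) + u k)\<^sup>2" for k
    using disagreement_contraction[OF pert reach, of k] disagreement_nonneg[OF agents]
    unfolding \<rho>_def u_def by (intro power_mono) auto
  also have "\<dots> k \<le> \<rho> * (disagreement m (x k))\<^sup>2 + (u k)\<^sup>2 / (1 - \<rho>)" for k
    using contraction_factor_bounds unfolding \<rho>_def by (rule power2_convex_add_le)
  finally have rec: "(disagreement m (x (k + B)))\<^sup>2 \<le> \<rho> * (disagreement m (x k))\<^sup>2 + (u k)\<^sup>2 / (1 - \<rho>)"
    for k .
  have u_bound: "(u k)\<^sup>2 \<le> 4 * real B * (\<Sum>t<B. (\<epsilon> (k + t))\<^sup>2)" for k
    using sum_squared_le_sum_of_squares[of "\<lambda>t. \<epsilon> (k + t)" "{..<B}"]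
    by (simp add: u_def power_mult_distrib mult.commute)
  have "summable (\<lambda>k. (\<epsilon> (k + t))\<^sup>2)" for t
    using summable_ignore_initial_segment[OF \<open>summable (\<lambda>t. (\<epsilon> t)\<^sup>2)\<close>] by simp
  then have "summable (\<lambda>k. 4 * real B * (\<Sum>t<B. (\<epsilon> (k + t))\<^sup>2))"
    by (intro summable_mult summable_sum)
  then have "summable (\<lambda>k. (u k)\<^sup>2)"
    by (rule summable_comparison_test') (simp add: u_bound)
  then have "summable (\<lambda>k. (u k)\<^sup>2 / (1 - \<rho>))" by (rule summable_divide)
  moreover have "0 \<le> \<rho>" "\<rho> < 1" using contraction_factor_bounds by (simp_all add: \<rho>_def)
  ultimately show ?thesis
    using summable_of_delayed_contraction[where S = "\<lambda>k. (disagreement m (x k))\<^sup>2"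
        and v = "\<lambda>k. (u k)\<^sup>2 / (1 - \<rho>)", OF _ _ rec] by simp
qed

end

lemma degree_le_max_degree: "i < m \<Longrightarrow> degree m E i \<le> max_degree m E"
  unfolding max_degree_def by (intro Max_ge) auto

lemma sum_adj_eq_degree: "(\<Sum>l<m. adj E i l) = real (degree m E i)"
  unfolding adj_def degree_def by (simp add: sum.If_cases Int_def conj_commute)

lemma priority_vectors_stochastic:
  fixes w :: "nat \<Rightarrow> nat \<Rightarrow> nat \<Rightarrow> real"
  assumes w_step: "\<And>k i j. i < m \<Longrightarrow> j < m \<Longrightarrow>
           w (Suc k) i j = w k i j + c * (\<Sum>l<m. adj E i l * (w k l j - w k i j))"
    and "0 \<le> c" and c_bound: "c * real (max_degree m E) \<le> 1"
    and init_sum: "\<And>i. i < m \<Longrightarrow> (\<Sum>j<m. w 0 i j) = 1"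
    and init_ge: "\<And>i j. i < m \<Longrightarrow> j < m \<Longrightarrow> \<eta> \<le> w 0 i j"
  shows "\<forall>i<m. (\<Sum>j<m. w k i j) = 1 \<and> (\<forall>j<m. \<eta> \<le> w k i j)"
proof (induction k)
  case 0
  then show ?case using init_sum init_ge by auto
next
  case (Suc k)
  show ?case
  proof (intro allI impI conjI)
    fix i assume "i < m"
    have "(\<Sum>j<m. \<Sum>l<m. adj E i l * (w k l j - w k i j))
        = (\<Sum>l<m. adj E i l * ((\<Sum>j<m. w k l j) - (\<Sum>j<m. w k i j)))"
      by (subst sum.swap) (simp add: sum_distrib_left[symmetric] sum_subtractf)
    also have "\<dots> = 0" using Suc.IH \<open>i < m\<close> by simp
    finally show "(\<Sum>j<m. w (Suc k) i j) = 1"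
      using Suc.IH \<open>i < m\<close> by (simp add: w_step sum.distrib flip: sum_distrib_left)
    fix j assume "j < m"
    define d where "d = (\<Sum>l<m. adj E i l)"
    have "c * d \<le> 1"
      using c_bound \<open>0 \<le> c\<close> degree_le_max_degree[OF \<open>i < m\<close>, of E]
      by (simp add: d_def sum_adj_eq_degree) (meson mult_left_mono of_nat_le_iff order_trans)
    have "(\<Sum>l<m. adj E i l * \<eta>) = d * \<eta>" by (simp add: d_def sum_distrib_right)
    then have "\<eta> = (1 - c * d) * \<eta> + c * (\<Sum>l<m. adj E i l * \<eta>)"
      by (simp add: algebra_simps)
    also have "\<dots> \<le> (1 - c * d) * w k i j + c * (\<Sum>l<m. adj E i l * w k l j)"
      using Suc.IH \<open>i < m\<close> \<open>j < m\<close> \<open>c * d \<le> 1\<close> \<open>0 \<le> c\<close>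
      by (intro add_mono mult_left_mono sum_mono) (auto simp: adj_def)
    also have "\<dots> = w (Suc k) i j"
      using \<open>i < m\<close> \<open>j < m\<close>
      by (simp add: w_step d_def algebra_simps sum_subtractf sum_distrib_right sum_distrib_left)
    finally show "\<eta> \<le> w (Suc k) i j" .
  qed
qed

lemma weight_graph_stochastic:
  fixes w :: "nat \<Rightarrow> nat \<Rightarrow> nat \<Rightarrow> real"
  assumes "0 < m" "0 < \<eta>"
    and row_sum: "\<And>k i. i < m \<Longrightarrow> (\<Sum>j<m. w k i j) = 1"
    and entry_ge: "\<And>k i j. i < m \<Longrightarrow> j < m \<Longrightarrow> \<eta> \<le> w k i j"
  shows "graph_stochastic_weights m E \<eta> (weight m E w)"
proof
  fix k i j
  define T where "T = {l. l < m \<and> l \<noteq> i \<and> \<not> E i l}"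
  define extra where "extra = (\<Sum>l\<in>T. w k i l)"
  have weight_eq: "weight m E w k i l = w k i l + (if l = i then extra else 0) - (if l \<in> T then w k i l else 0)"
    if "l < m" for l
    using that by (auto simp: weight_def T_def extra_def)
  assume "i < m"
  have "0 \<le> extra"
    unfolding extra_def T_def using \<open>i < m\<close>
    by (auto intro!: sum_nonneg order_trans[OF less_imp_le[OF \<open>0 < \<eta>\<close>] entry_ge])
  then show "\<eta> \<le> weight m E w k i i"
    using entry_ge[OF \<open>i < m\<close> \<open>i < m\<close>, of k] weight_eq[OF \<open>i < m\<close>]
    by (simp add: T_def add_increasing2)
  show "0 \<le> weight m E w k i j" if "j < m"
    using entry_ge[OF \<open>i < m\<close> that, of k] \<open>0 < \<eta>\<close> \<open>0 \<le> extra\<close> weight_eq[OF that] by auto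
  show "\<eta> \<le> weight m E w k i j" if "j < m" "E i j"
    using entry_ge[OF \<open>i < m\<close> that(1), of k] weight_eq[OF that(1)] that \<open>0 \<le> extra\<close>
    by (auto simp: T_def)
  have "(\<Sum>j<m. weight m E w k i j) = 1 + extra - (\<Sum>j<m. if j \<in> T then w k i j else 0)"
    using \<open>i < m\<close> row_sum[OF \<open>i < m\<close>] by (simp add: weight_eq sum.distrib sum_subtractf)
  also have "(\<Sum>j<m. if j \<in> T then w k i j else 0) = extra"
    unfolding extra_def by (simp add: sum.If_cases T_def) (intro sum.cong; auto)
  finally show "(\<Sum>j<m. weight m E w k i j) = 1" by simp
qed (use assms in auto)

locale projected_consensus = graph_stochastic_weights +
  fixes B :: nat and X :: "'a::euclidean_space set" and g :: "nat \<Rightarrow> 'a \<Rightarrow> 'a" and L :: real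
    and \<alpha> :: "nat \<Rightarrow> real" and x :: "nat \<Rightarrow> nat \<Rightarrow> 'a"
  assumes reach: "j < m \<Longrightarrow> (0, j) \<in> influence m E ^^ B"
    and X_convex: "convex X" and X_compact: "compact X" and X_nonempty: "X \<noteq> {}"
    and g_bound: "i < m \<Longrightarrow> z \<in> X \<Longrightarrow> norm (g i z) \<le> L"
    and \<alpha>_nonneg: "0 \<le> \<alpha> k"
    and x_step: "i < m \<Longrightarrow>
           x (Suc k) i = closest_point X ((\<Sum>j<m. a k i j *\<^sub>R x k j) - \<alpha> k *\<^sub>R g i (x k i))"
begin

lemma X_closed: "closed X"
  using X_compact by (rule compact_imp_closed)

lemma iterate_in_X: "i < m \<Longrightarrow> x (Suc k) i \<in> X"
  using x_step closest_point_in_set[OF X_closed X_nonempty] by simp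

lemma iterate_perturbation_le:
  assumes "i < m"
  shows "norm (x (Suc (Suc t)) i - (\<Sum>j<m. a (Suc t) i j *\<^sub>R x (Suc t) j)) \<le> \<alpha> (Suc t) * L"
proof -
  have "(\<Sum>j<m. a (Suc t) i j *\<^sub>R x (Suc t) j) \<in> X"
    using row_sum[OF assms] nonneg[OF assms] iterate_in_X
    by (intro convex_sum[OF _ X_convex]) auto
  then have "norm (x (Suc (Suc t)) i - (\<Sum>j<m. a (Suc t) i j *\<^sub>R x (Suc t) j))
      \<le> norm (\<alpha> (Suc t) *\<^sub>R g i (x (Suc t) i))"
    unfolding x_step[OF assms] by (rule closest_point_step_le[OF X_convex X_closed])
  also have "\<dots> \<le> \<alpha> (Suc t) * L"
    using g_bound[OF assms iterate_in_X[OF assms]] \<alpha>_nonneg by (simp add: mult_left_mono)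
  finally show ?thesis .
qed

definition perturbation :: "nat \<Rightarrow> real" where
  "perturbation t = (\<Sum>i<m. norm (x (Suc t) i - (\<Sum>j<m. a t i j *\<^sub>R x t j)))"

lemma norm_le_perturbation:
  "i < m \<Longrightarrow> norm (x (Suc t) i - (\<Sum>j<m. a t i j *\<^sub>R x t j)) \<le> perturbation t"
  unfolding perturbation_def by (intro member_le_sum) auto

lemma perturbation_nonneg: "0 \<le> perturbation t"
  by (simp add: perturbation_def sum_nonneg)

lemma perturbation_le: "t \<ge> 1 \<Longrightarrow> perturbation t \<le> real m * L * \<alpha> t"
proof -
  assume "t \<ge> 1"
  then obtain s where "t = Suc s" using not0_implies_Suc by fastforce
  then have "perturbation t \<le> (\<Sum>i<m. \<alpha> t * L)"
    unfolding perturbation_def using iterate_perturbation_le by (intro sum_mono) auto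
  then show ?thesis by (simp add: algebra_simps)
qed

lemma disagreement_bounded: "disagreement m (x k) \<le> max (disagreement m (x 0)) (diameter X)"
proof (cases k)
  case (Suc k')
  have "disagreement m (x (Suc k')) \<le> diameter X"
    using agents compact_imp_bounded[OF X_compact] iterate_in_X by (rule disagreement_le_diameter)
  then show ?thesis using Suc by simp
qed simp

lemma disagreement_tendsto_zero_of_steps:
  assumes "\<alpha> \<longlonglongrightarrow> 0"
  shows "(\<lambda>k. disagreement m (x k)) \<longlonglongrightarrow> 0"
proof (rule disagreement_tendsto_zero[OF norm_le_perturbation reach _ disagreement_bounded])
  have "\<forall>\<^sub>F t in sequentially. perturbation t \<le> real m * L * \<alpha> t"
    by (rule eventually_sequentiallyI[of 1]) (rule perturbation_le)
  moreover have "(\<lambda>t. real m * L * \<alpha> t) \<longlonglongrightarrow> 0"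
    using assms by (rule tendsto_mult_right_zero)
  ultimately show "perturbation \<longlonglongrightarrow> 0"
    by (rule tendsto_sandwich[OF always_eventually[OF allI[OF perturbation_nonneg]] _ tendsto_const])
qed

lemma disagreement_power2_summable_of_steps:
  assumes "summable (\<lambda>k. (\<alpha> k)\<^sup>2)"
  shows "summable (\<lambda>k. (disagreement m (x k))\<^sup>2)"
proof (rule disagreement_power2_summable[OF norm_le_perturbation reach])
  have "(perturbation t)\<^sup>2 \<le> (real m * L)\<^sup>2 * (\<alpha> t)\<^sup>2" if "t \<ge> 1" for t
    using power_mono[OF perturbation_le[OF that] perturbation_nonneg] by (simp add: power_mult_distrib)
  then have "\<forall>\<^sub>F t in sequentially. norm ((perturbation t)\<^sup>2) \<le> (real m * L)\<^sup>2 * (\<alpha> t)\<^sup>2"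
    by (intro eventually_sequentiallyI[of 1]) simp
  then show "summable (\<lambda>t. (perturbation t)\<^sup>2)"
    by (rule summable_comparison_test_ev) (intro summable_mult assms)
qed

lemma deviation_from_average_tendsto_zero:
  assumes "\<alpha> \<longlonglongrightarrow> 0" "i < m"
  shows "(\<lambda>k. norm (x k i - (1 / real m) *\<^sub>R (\<Sum>j<m. x k j))) \<longlonglongrightarrow> 0"
proof (rule tendsto_sandwich[OF _ _ tendsto_const disagreement_tendsto_zero_of_steps[OF assms(1)]])
  show "\<forall>\<^sub>F k in sequentially. norm (x k i - (1 / real m) *\<^sub>R (\<Sum>j<m. x k j)) \<le> disagreement m (x k)"
    by (intro always_eventually allI norm_diff_average_le_disagreement assms(2))
qed simp

lemma step_weighted_deviation_from_average_summable:
  assumes "summable (\<lambda>k. (\<alpha> k)\<^sup>2)" "i < m"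
  shows "summable (\<lambda>k. \<alpha> k * norm (x k i - (1 / real m) *\<^sub>R (\<Sum>j<m. x k j)))"
proof (rule summable_comparison_test'[where N = 0])
  show "summable (\<lambda>k. \<alpha> k * disagreement m (x k))"
    using assms(1) disagreement_power2_summable_of_steps[OF assms(1)]
    by (rule summable_mult_of_summable_power2)
  show "norm (\<alpha> k * norm (x k i - (1 / real m) *\<^sub>R (\<Sum>j<m. x k j))) \<le> \<alpha> k * disagreement m (x k)"
    for k using mult_left_mono[OF norm_diff_average_le_disagreement[OF assms(2)] \<alpha>_nonneg[of k]]
    by (simp add: \<alpha>_nonneg)
qed

end

theorem lemma4p7:
  fixes m :: nat
    and E :: "nat \<Rightarrow> nat \<Rightarrow> bool"
    and c :: real
    and w :: "nat \<Rightarrow> nat \<Rightarrow> nat \<Rightarrow> real"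
    and f :: "nat \<Rightarrow> 'a::euclidean_space \<Rightarrow> real"
    and grad :: "nat \<Rightarrow> 'a \<Rightarrow> 'a"
    and X :: "'a set"
    and \<alpha> :: "nat \<Rightarrow> real"
    and x :: "nat \<Rightarrow> nat \<Rightarrow> 'a"
    and y :: "nat \<Rightarrow> 'a"
  assumes m_pos: "m \<ge> 1"
    and graph: "undirected_graph m E"
    and conn: "connected_graph m E"
    and c_pos: "0 < c"
    and c_bound: "c * real (max_degree m E) < 1"
    and w_init: "\<And>i j. i < m \<Longrightarrow> j < m \<Longrightarrow> 0 < w 0 i j \<and> w 0 i j < 1"
    and w_init_sum: "\<And>i. i < m \<Longrightarrow> (\<Sum>j<m. w 0 i j) = 1"
    and w_step: "\<And>k i j. i < m \<Longrightarrow> j < m \<Longrightarrow>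
           w (Suc k) i j = w k i j + c * (\<Sum>l<m. adj E i l * (w k l j - w k i j))"
    and grad: "\<And>i z. i < m \<Longrightarrow> (f i has_derivative (\<lambda>h. grad i z \<bullet> h)) (at z)"
    and grad_cont: "\<And>i. i < m \<Longrightarrow> continuous_on UNIV (grad i)"
    and f_convex: "\<And>i. i < m \<Longrightarrow> convex_on UNIV (f i)"
    and X_ne: "X \<noteq> {}"
    and X_compact: "compact X"
    and X_convex: "convex X"
    and \<alpha>_pos: "\<And>k. 0 < \<alpha> k"
    and x_step: "\<And>k i. i < m \<Longrightarrow>
           x (Suc k) i = closest_point X ((\<Sum>j<m. weight m E w k i j *\<^sub>R x k j) - \<alpha> k *\<^sub>R grad i (x k i))"
    and y_def: "\<And>k. y k = (1 / real m) *\<^sub>R (\<Sum>j<m. x k j)"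
  shows "(\<alpha> \<longlonglongrightarrow> 0 \<longrightarrow> (\<forall>i<m. (\<lambda>k. norm (x k i - y k)) \<longlonglongrightarrow> 0))
       \<and> (summable (\<lambda>k. (\<alpha> k)\<^sup>2) \<longrightarrow> (\<forall>i<m. summable (\<lambda>k. \<alpha> k * norm (x k i - y k))))"
proof -
  have "0 < m" using m_pos by simp
  obtain \<eta> where "0 < \<eta>" and \<eta>_le: "\<And>i j. i < m \<Longrightarrow> j < m \<Longrightarrow> \<eta> \<le> w 0 i j"
    using matrix_pos_lower_bound[of m "w 0"] w_init by blast
  have "\<forall>i<m. (\<Sum>j<m. w k i j) = 1 \<and> (\<forall>j<m. \<eta> \<le> w k i j)" for k
    using c_pos c_bound by (intro priority_vectors_stochastic[OF w_step _ _ w_init_sum \<eta>_le]) auto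
  then have weights: "graph_stochastic_weights m E \<eta> (weight m E w)"
    using \<open>0 < m\<close> \<open>0 < \<eta>\<close> by (intro weight_graph_stochastic) auto
  obtain B where reach: "\<And>j. j < m \<Longrightarrow> (0, j) \<in> influence m E ^^ B"
    using connected_graph_uniform_influence[OF conn graph \<open>0 < m\<close>] by blast
  obtain L where L: "\<And>i z. i < m \<Longrightarrow> z \<in> X \<Longrightarrow> norm (grad i z) \<le> L"
    using continuous_family_bounded_on_compact[OF X_compact] grad_cont continuous_on_subset
    by (metis subset_UNIV)
  interpret projected_consensus m E \<eta> "weight m E w" B X grad L \<alpha> x
    using weights reach X_convex X_compact X_ne L less_imp_le[OF \<alpha>_pos] x_step
    by (simp add: projected_consensus_def projected_consensus_axioms_def)
  show ?thesis
    using deviation_from_average_tendsto_zero step_weighted_deviation_from_average_summable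
    by (simp add: y_def)
qed

end
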